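(* Let $\mathcal{B}^0\subset\mathbb{R}^6$ be the set of all $(a,b,c,d,e,f)\neq 0$ such that the Type $\mathcal{B}$ model $\mathcal{N}(a,b,c,d,e,f)$ is flat. Define $\mathcal{U}_1(r,s):=(1+rs^2,\,-s(1+rs^2),\,rs,\,-rs^2,\,r,\,-rs)$, $\mathcal{U}_2(u,v):=(u,v,0,0,0,0)$, $\mathcal{U}_3(u,v):=(u,v,0,1+u,0,0)$, and let $\mathcal{B}_i$ be the range of $\mathcal{U}_i$ (over all real parameters). Then $\mathcal{B}^0=(\mathcal{B}_1\cup\mathcal{B}_2\cup\mathcal{B}_3)\setminus\{0\}$. Moreover $\mathcal{B}_2$ and $\mathcal{B}_3$ are closed smooth surfaces in $\mathbb{R}^6$ diffeomorphic to $\mathbb{R}^2$ which intersect transversally along the curve $\{(-1,v,0,0,0,0):v\in\mathbb{R}\}$; and $\mathcal{B}_1$ can be completed to a smooth closed surface $\tilde{\mathcal{B}}_1$ which intersects $\mathcal{B}_2$ transversally along the curve $\{(1,v,0,0,0,0):v\in\mathbb{R}\}$ and intersects $\mathcal{B}_3$ transversally along the curve $\{(0,v,0,1,0,0):v\in\mathbb{R}\}$.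
   Context: For $(a,b,c,d,e,f)\in\mathbb{R}^6$, the Type $\mathcal{B}$ model $\mathcal{N}(a,b,c,d,e,f)$ is $(\mathbb{R}^+\times\mathbb{R},\nabla)$ where $\nabla$ is the torsion free connection with Christoffel symbols ($\nabla_{\partial_{x^i}}\partial_{x^j}=\Gamma_{ij}{}^k\partial_{x^k}$) $\Gamma_{11}{}^1=a/x^1$, $\Gamma_{11}{}^2=b/x^1$, $\Gamma_{12}{}^1=\Gamma_{21}{}^1=c/x^1$, $\Gamma_{12}{}^2=\Gamma_{21}{}^2=d/x^1$, $\Gamma_{22}{}^1=e/x^1$, $\Gamma_{22}{}^2=f/x^1$; this identifies Type $\mathcal{B}$ geometries with $\mathbb{R}^6$. Its Ricci tensor is $\rho=(x^1)^{-2}\begin{pmatrix}(a-d+1)d+b(f-c) & cd-be+f\\ c(d-1)-be & -c^2+fc+(a-d-1)e\end{pmatrix}$, and the model is flat iff $\rho=0$. *)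

theory Defs
  imports "HOL-Analysis.Analysis"
begin

text \<open>Points of R^6 are identified with Type B geometries N(a,b,c,d,e,f).\<close>

definition pt6 :: "real \<Rightarrow> real \<Rightarrow> real \<Rightarrow> real \<Rightarrow> real \<Rightarrow> real \<Rightarrow> real^6" where
  "pt6 a b c d e f = vector [a, b, c, d, e, f]"

text \<open>Entries of (x^1)^2 times the Ricci tensor of the Type B model N(a,b,c,d,e,f).\<close>
definition typeB_ricci :: "real^6 \<Rightarrow> real^2^2" where
  "typeB_ricci p = (let a = p$1; b = p$2; c = p$3; d = p$4; e = p$5; f = p$6 in
     (\<chi> i j. if i = 1 \<and> j = 1 then (a - d + 1) * d + b * (f - c)
            else if i = 1 \<and> j = 2 then c * d - b * e + f
            else if i = 2 \<and> j = 1 then c * (d - 1) - b * e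
            else - (c^2) + f * c + (a - d - 1) * e))"

text \<open>The model is flat iff its Ricci tensor vanishes (the factor (x^1)^-2 is nonzero).\<close>
definition typeB_flat :: "real^6 \<Rightarrow> bool" where
  "typeB_flat p \<longleftrightarrow> typeB_ricci p = 0"

definition B0 :: "(real^6) set" where
  "B0 = {p. p \<noteq> 0 \<and> typeB_flat p}"

definition U1 :: "real \<Rightarrow> real \<Rightarrow> real^6" where
  "U1 r s = pt6 (1 + r * s^2) (- s * (1 + r * s^2)) (r * s) (- r * s^2) r (- r * s)"

definition U2 :: "real \<Rightarrow> real \<Rightarrow> real^6" where
  "U2 u v = pt6 u v 0 0 0 0"

definition U3 :: "real \<Rightarrow> real \<Rightarrow> real^6" where
  "U3 u v = pt6 u v 0 (1 + u) 0 0"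

definition B1 :: "(real^6) set" where "B1 = range (\<lambda>(r, s). U1 r s)"
definition B2 :: "(real^6) set" where "B2 = range (\<lambda>(u, v). U2 u v)"
definition B3 :: "(real^6) set" where "B3 = range (\<lambda>(u, v). U3 u v)"

definition smooth_on :: "'a::euclidean_space set \<Rightarrow> ('a \<Rightarrow> 'b::real_normed_vector) \<Rightarrow> bool" where
  "smooth_on U f \<longleftrightarrow> (\<exists>D :: 'a list \<Rightarrow> 'a \<Rightarrow> 'b. D [] = f \<and>
      (\<forall>xs. continuous_on U (D xs)) \<and>
      (\<forall>xs. \<forall>v\<in>Basis. \<forall>x\<in>U.
          ((\<lambda>t. D xs (x + t *\<^sub>R v)) has_vector_derivative D (v # xs) x) (at 0)))"

definition immersion_on :: "'a::euclidean_space set \<Rightarrow> ('a \<Rightarrow> 'b::real_normed_vector) \<Rightarrow> bool" where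
  "immersion_on U \<phi> \<longleftrightarrow> (\<forall>x\<in>U. \<exists>L. (\<phi> has_derivative L) (at x) \<and> inj L)"

definition smooth_surface :: "(real^6) set \<Rightarrow> bool" where
  "smooth_surface S \<longleftrightarrow> (\<forall>p\<in>S. \<exists>U (V :: (real^2) set) \<phi>.
      open U \<and> p \<in> U \<and> open V \<and> smooth_on V \<phi> \<and> immersion_on V \<phi> \<and>
      inj_on \<phi> V \<and> \<phi> ` V = S \<inter> U \<and> continuous_on (S \<inter> U) (inv_into V \<phi>))"

definition diffeomorphic_to_plane :: "(real^6) set \<Rightarrow> bool" where
  "diffeomorphic_to_plane S \<longleftrightarrow> (\<exists>\<phi> :: real^2 \<Rightarrow> real^6.
      smooth_on UNIV \<phi> \<and> immersion_on UNIV \<phi> \<and> inj \<phi> \<and> range \<phi> = S \<and>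
      continuous_on S (inv \<phi>))"

definition tangent_space :: "(real^6) set \<Rightarrow> real^6 \<Rightarrow> (real^6) set" where
  "tangent_space S p = {w. \<exists>\<gamma> :: real \<Rightarrow> real^6. (\<forall>t. \<gamma> t \<in> S) \<and> \<gamma> 0 = p \<and>
      (\<gamma> has_vector_derivative w) (at 0)}"

text \<open>Two surfaces in R^6 intersect transversally along C: their intersection is exactly C
  and at each point of C their tangent planes are distinct (so meet in a line).\<close>
definition intersect_transversally_along :: "(real^6) set \<Rightarrow> (real^6) set \<Rightarrow> (real^6) set \<Rightarrow> bool" where
  "intersect_transversally_along S T C \<longleftrightarrow>
     S \<inter> T = C \<and> (\<forall>p\<in>C. tangent_space S p \<noteq> tangent_space T p)"

end

theory Submission
  imports Defs
begin

(* Subtracting the second and third Ricci equations gives f = -c. If e = 0 the remaining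
   equations force c = 0 and (a - d + 1) d = 0, i.e. a point of B2 (d = 0) or of B3
   (d = 1 + a); if e \<noteq> 0 they are solved uniquely by U1 e (c / e).

   Each surface is covered by polynomial charts R^2 \<rightarrow> R^6 admitting a left inverse that is
   differentiable on the image; by the chain rule such a chart is an injective immersion and a
   homeomorphism onto its image. The closure of B1 is the real algebraic set B1_tilde: it adds
   to B1 the line (0, v, 0, 1, 0, 0), which is the slice t = 0 of the reparametrisation
   t = 1/s of U1. Transversality is witnessed by a curve in one surface whose velocity has a
   nonzero component in a coordinate that is constant on the other surface. *)

lemma exhaust_6:
  fixes x :: 6
  shows "x = 1 \<or> x = 2 \<or> x = 3 \<or> x = 4 \<or> x = 5 \<or> x = 6"
proof (induct x)
  case (of_int z)
  then have "z = 0 \<or> z = 1 \<or> z = 2 \<or> z = 3 \<or> z = 4 \<or> z = 5" by fastforce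
  then show ?case by auto
qed

lemma forall_6: "(\<forall>i::6. P i) \<longleftrightarrow> P 1 \<and> P 2 \<and> P 3 \<and> P 4 \<and> P 5 \<and> P 6"
  by (metis exhaust_6)

lemma pt6_nth [simp]:
  "pt6 a b c d e f $ 1 = a" "pt6 a b c d e f $ 2 = b" "pt6 a b c d e f $ 3 = c"
  "pt6 a b c d e f $ 4 = d" "pt6 a b c d e f $ 5 = e" "pt6 a b c d e f $ 6 = f"
  unfolding pt6_def vector_def by simp_all

lemma pt6_eq_iff:
  "pt6 a b c d e f = pt6 a' b' c' d' e' f' \<longleftrightarrow> a = a' \<and> b = b' \<and> c = c' \<and> d = d' \<and> e = e' \<and> f = f'"
  by (metis pt6_nth)

lemma pt6_eta: "pt6 (p$1) (p$2) (p$3) (p$4) (p$5) (p$6) = p"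
  by (simp add: vec_eq_iff forall_6)

lemma pt6_basis_expansion:
  "pt6 a b c d e f = a *\<^sub>R pt6 1 0 0 0 0 0 + b *\<^sub>R pt6 0 1 0 0 0 0 + c *\<^sub>R pt6 0 0 1 0 0 0
     + d *\<^sub>R pt6 0 0 0 1 0 0 + e *\<^sub>R pt6 0 0 0 0 1 0 + f *\<^sub>R pt6 0 0 0 0 0 1"
  by (simp add: vec_eq_iff forall_6)

lemma has_vector_derivative_pt6:
  assumes "(f1 has_real_derivative f1') F" "(f2 has_real_derivative f2') F"
    "(f3 has_real_derivative f3') F" "(f4 has_real_derivative f4') F"
    "(f5 has_real_derivative f5') F" "(f6 has_real_derivative f6') F"
  shows "((\<lambda>t. pt6 (f1 t) (f2 t) (f3 t) (f4 t) (f5 t) (f6 t)) has_vector_derivative pt6 f1' f2' f3' f4' f5' f6') F"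
  unfolding pt6_basis_expansion[of "f1 _"] pt6_basis_expansion[of f1']
  by (intro has_vector_derivative_add bounded_linear.has_vector_derivative[OF bounded_linear_scaleR_left]
      assms[unfolded has_real_derivative_iff_has_vector_derivative])

lemma range_vec2_param: "range (\<lambda>x::real^2. F (x$1) (x$2)) = range (\<lambda>(u, v). F u v)"
proof -
  have "F u v \<in> range (\<lambda>x::real^2. F (x$1) (x$2))" for u v
    by (rule image_eqI[where x = "vector [u, v]"]) auto
  then show ?thesis by auto
qed

lemma differentiable_vec_nth [derivative_intros]: "(\<lambda>x. x $ i) differentiable F"
  by (rule bounded_linear_imp_differentiable[OF bounded_linear_vec_nth])

lemma vector2_eq_iff: "vector [u, v] = (x :: real^2) \<longleftrightarrow> u = x$1 \<and> v = x$2"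
  by (auto simp: vec_eq_iff forall_2)

lemma differentiable_vector2:
  assumes "f differentiable (at p)" "g differentiable (at p)"
  shows "(\<lambda>p. vector [f p, g p] :: real^2) differentiable (at p)"
proof -
  have "(\<lambda>p. vector [f p, g p] :: real^2) = (\<lambda>p. f p *\<^sub>R axis 1 1 + g p *\<^sub>R axis 2 1)"
    by (auto simp: fun_eq_iff vec_eq_iff forall_2 axis_def)
  then show ?thesis
    using assms by simp
qed

section \<open>Flat Type B models\<close>

lemma U1_in_B1 [simp]: "U1 r s \<in> B1"
  and U2_in_B2 [simp]: "U2 u v \<in> B2"
  and U3_in_B3 [simp]: "U3 u v \<in> B3"
  by (auto simp: B1_def B2_def B3_def)

lemma B1_iff: "p \<in> B1 \<longleftrightarrow> (\<exists>r s. p = U1 r s)"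
  and B2_iff: "p \<in> B2 \<longleftrightarrow> (\<exists>u v. p = U2 u v)"
  and B3_iff: "p \<in> B3 \<longleftrightarrow> (\<exists>u v. p = U3 u v)"
  by (auto simp: B1_def B2_def B3_def)

lemma typeB_flat_pt6:
  "typeB_flat (pt6 a b c d e f) \<longleftrightarrow>
     (a - d + 1) * d + b * (f - c) = 0 \<and> c * d - b * e + f = 0 \<and>
     c * (d - 1) - b * e = 0 \<and> - (c^2) + f * c + (a - d - 1) * e = 0"
  by (simp add: typeB_flat_def typeB_ricci_def Let_def vec_eq_iff forall_2)

lemma flat_in_B123:
  fixes a b c d e f :: real
  assumes eq1: "(a - d + 1) * d + b * (f - c) = 0" and eq2: "c * d - b * e + f = 0"
    and eq3: "c * (d - 1) - b * e = 0" and eq4: "- (c^2) + f * c + (a - d - 1) * e = 0"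
  shows "pt6 a b c d e f \<in> B1 \<union> B2 \<union> B3"
proof -
  have f: "f = - c"
    using eq2 eq3 by algebra
  show ?thesis
  proof (cases "e = 0")
    case True
    then have "c = 0"
      using eq4 f by (simp add: power2_eq_square)
    then have "d = 0 \<or> d = 1 + a"
      using eq1 f by auto
    then show ?thesis
    proof
      assume "d = 0"
      then have "pt6 a b c d e f = U2 a b"
        using True \<open>c = 0\<close> f by (simp add: U2_def)
      then show ?thesis by simp
    next
      assume "d = 1 + a"
      then have "pt6 a b c d e f = U3 a b"
        using True \<open>c = 0\<close> f by (simp add: U3_def)
      then show ?thesis by simp
    qed
  next
    case False
    define s where "s = c / e"
    have c: "c = e * s"
      using False by (simp add: s_def)
    have "e * (s * (d - 1) - b) = 0"
      using eq3 unfolding c by (simp add: algebra_simps)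
    then have b: "b = s * (d - 1)"
      using False by simp
    have "e * (a - d - 1 - 2 * e * s^2) = 0"
      using eq4 unfolding f c by (simp add: algebra_simps power2_eq_square)
    then have a: "a = d + 1 + 2 * e * s^2"
      using False by simp
    have d: "d = - e * s^2"
      using eq1 unfolding a b c f by (simp add: algebra_simps power2_eq_square)
    have "pt6 a b c d e f = U1 e s"
      unfolding U1_def pt6_eq_iff a b c d f by (simp add: algebra_simps power2_eq_square)
    then show ?thesis by simp
  qed
qed

lemma B123_flat: "p \<in> B1 \<union> B2 \<union> B3 \<Longrightarrow> typeB_flat p"
  by (auto simp: B1_iff B2_iff B3_iff U1_def U2_def U3_def typeB_flat_pt6 algebra_simps power2_eq_square)

lemma B0_eq: "B0 = (B1 \<union> B2 \<union> B3) - {0}"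
proof -
  have "typeB_flat p \<longleftrightarrow> p \<in> B1 \<union> B2 \<union> B3" for p
    using flat_in_B123[of "p$1" "p$4" "p$2" "p$6" "p$3" "p$5"] B123_flat
    by (metis pt6_eta typeB_flat_pt6)
  then show ?thesis
    unfolding B0_def by blast
qed

section \<open>Polynomial maps are smooth\<close>

lemma smooth_on_const: "smooth_on V (\<lambda>x. c)"
  unfolding smooth_on_def
  by (rule exI[of _ "\<lambda>xs x. if xs = [] then c else 0"]) (auto intro: has_vector_derivative_const)

lemma smooth_on_add:
  assumes "smooth_on V f" "smooth_on V g"
  shows "smooth_on V (\<lambda>x. f x + g x)"
proof -
  obtain Df where Df: "Df [] = f" "\<And>xs. continuous_on V (Df xs)"
    "\<And>xs v x. v \<in> Basis \<Longrightarrow> x \<in> V \<Longrightarrow> ((\<lambda>t. Df xs (x + t *\<^sub>R v)) has_vector_derivative Df (v # xs) x) (at 0)"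
    using assms(1) unfolding smooth_on_def by blast
  obtain Dg where Dg: "Dg [] = g" "\<And>xs. continuous_on V (Dg xs)"
    "\<And>xs v x. v \<in> Basis \<Longrightarrow> x \<in> V \<Longrightarrow> ((\<lambda>t. Dg xs (x + t *\<^sub>R v)) has_vector_derivative Dg (v # xs) x) (at 0)"
    using assms(2) unfolding smooth_on_def by blast
  show ?thesis
    unfolding smooth_on_def
    by (rule exI[of _ "\<lambda>xs x. Df xs x + Dg xs x"])
      (auto simp: Df(1) Dg(1) intro!: continuous_on_add Df(2) Dg(2) has_vector_derivative_add Df(3) Dg(3))
qed

lemma smooth_on_scaleR_const:
  fixes f :: "'a::euclidean_space \<Rightarrow> real"
  assumes "smooth_on V f"
  shows "smooth_on V (\<lambda>x. f x *\<^sub>R w)"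
proof -
  obtain D where D: "D [] = f" "\<And>xs. continuous_on V (D xs)"
    "\<And>xs v x. v \<in> Basis \<Longrightarrow> x \<in> V \<Longrightarrow> ((\<lambda>t. D xs (x + t *\<^sub>R v)) has_vector_derivative D (v # xs) x) (at 0)"
    using assms unfolding smooth_on_def by blast
  show ?thesis
    unfolding smooth_on_def
    by (rule exI[of _ "\<lambda>xs x. D xs x *\<^sub>R w"])
      (auto simp: D(1) intro!: continuous_on_scaleR D(2)
        bounded_linear.has_vector_derivative[OF bounded_linear_scaleR_left] D(3))
qed

lemma smooth_on_monomial:
  fixes k :: "'n::finite \<Rightarrow> nat"
  shows "smooth_on V (\<lambda>x::real^'n. \<Prod>i\<in>UNIV. (x$i) ^ k i)"
proof -
  (* D xs is the iterated partial derivative along the directions xs: differentiating c times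
     along axis i contributes the falling factorial k_i (k_i - 1) ... (k_i - c + 1), which
     vanishes for c > k_i thanks to truncated subtraction. *)
  define D where "D xs x = (\<Prod>i\<in>UNIV. real (\<Prod>m<count_list xs (axis i 1). k i - m) * (x$i) ^ (k i - count_list xs (axis i 1)))"
    for xs :: "(real^'n) list" and x :: "real^'n"
  have "((\<lambda>t. D xs (x + t *\<^sub>R v)) has_vector_derivative D (v # xs) x) (at 0)"
    if basis: "v \<in> Basis" for xs v x
  proof -
    obtain j where v: "v = axis j 1"
      using axis_inverse[OF basis] by blast
    define c where "c i = count_list xs (axis i (1::real))" for i
    define A where "A i = real (\<Prod>m<c i. k i - m)" for i
    define R where "R = (\<Prod>i\<in>UNIV - {j}. A i * (x$i) ^ (k i - c i))"
    have D_shift: "D xs (x + t *\<^sub>R v) = A j * (x$j + t) ^ (k j - c j) * R" for t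
      unfolding D_def A_def c_def R_def
      by (subst prod.remove[of UNIV j]) (auto simp: v axis_def intro!: prod.cong)
    have count_Suc: "count_list (v # xs) (axis i 1) = (if i = j then Suc (c i) else c i)" for i
      by (simp add: v c_def axis_eq_axis)
    have D_Suc: "D (v # xs) x = A j * real (k j - c j) * (x$j) ^ (k j - c j - 1) * R"
      unfolding D_def count_Suc R_def
      by (subst prod.remove[of UNIV j]) (auto simp: A_def intro!: prod.cong)
    have "((\<lambda>t. A j * (x$j + t) ^ (k j - c j) * R) has_real_derivative A j * (real (k j - c j) * (x$j + 0) ^ (k j - c j - 1)) * R) (at 0)"
      by (auto intro!: derivative_eq_intros)
    then show ?thesis
      unfolding D_shift D_Suc has_real_derivative_iff_has_vector_derivative by (simp add: algebra_simps)
  qed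
  moreover have "D [] = (\<lambda>x. \<Prod>i\<in>UNIV. (x$i) ^ k i)"
    by (simp add: D_def fun_eq_iff)
  moreover have "continuous_on V (D xs)" for xs
    unfolding D_def by (intro continuous_intros)
  ultimately show ?thesis
    unfolding smooth_on_def by blast
qed

lemma smooth_on_monomial2: "smooth_on V (\<lambda>x::real^2. (x$1) ^ k * (x$2) ^ l)"
  using smooth_on_monomial[of V "\<lambda>i. if i = 1 then k else l"] by (simp add: UNIV_2)

definition poly_map :: "(nat \<times> nat \<times> 'b::real_normed_vector) list \<Rightarrow> real^2 \<Rightarrow> 'b" where
  "poly_map ms x = (\<Sum>(k, l, w)\<leftarrow>ms. ((x$1) ^ k * (x$2) ^ l) *\<^sub>R w)"

lemma poly_map_Nil: "poly_map [] = (\<lambda>x. 0)"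
  and poly_map_Cons: "poly_map ((k, l, w) # ms) = (\<lambda>x. ((x$1) ^ k * (x$2) ^ l) *\<^sub>R w + poly_map ms x)"
  by (simp_all add: poly_map_def fun_eq_iff)

lemma smooth_on_poly_map: "smooth_on V (poly_map ms)"
proof (induction ms)
  case (Cons m ms)
  then show ?case
    by (cases m) (simp add: poly_map_Cons smooth_on_add smooth_on_scaleR_const smooth_on_monomial2)
qed (simp add: poly_map_Nil smooth_on_const)

lemma poly_map_differentiable: "poly_map ms differentiable (at x)"
proof (induction ms)
  case (Cons m ms)
  then show ?case
    by (cases m) (simp add: poly_map_Cons differentiable_vec_nth)
qed (simp add: poly_map_Nil)

section \<open>Embedded planes and tangent spaces\<close>

lemma immersion_on_if_differentiable_left_inverse:
  fixes \<phi> :: "'a::euclidean_space \<Rightarrow> 'b::real_normed_vector"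
  assumes "open V"
    and \<phi>_diff: "\<And>x. x \<in> V \<Longrightarrow> \<phi> differentiable (at x)"
    and left_inverse: "\<And>x. x \<in> V \<Longrightarrow> g (\<phi> x) = x"
    and g_diff: "\<And>x. x \<in> V \<Longrightarrow> g differentiable (at (\<phi> x))"
  shows "immersion_on V \<phi>"
  unfolding immersion_on_def
proof
  fix x assume x: "x \<in> V"
  obtain D\<phi> where D\<phi>: "(\<phi> has_derivative D\<phi>) (at x)"
    using \<phi>_diff[OF x] unfolding differentiable_def by blast
  obtain Dg where Dg: "(g has_derivative Dg) (at (\<phi> x))"
    using g_diff[OF x] unfolding differentiable_def by blast
  have "((\<lambda>y. g (\<phi> y)) has_derivative (\<lambda>h. Dg (D\<phi> h))) (at x)"
    using diff_chain_at[OF D\<phi> Dg] by (simp add: o_def)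
  moreover have "((\<lambda>y. g (\<phi> y)) has_derivative (\<lambda>h. h)) (at x)"
    by (rule has_derivative_transform_within_open[OF has_derivative_ident \<open>open V\<close> x])
      (simp add: left_inverse)
  ultimately have "(\<lambda>h. Dg (D\<phi> h)) = (\<lambda>h. h)"
    by (rule has_derivative_unique)
  then have "inj D\<phi>"
    by (metis injI)
  with D\<phi> show "\<exists>L. (\<phi> has_derivative L) (at x) \<and> inj L"
    by blast
qed

lemma continuous_on_inv_if_left_inverse:
  assumes "\<And>x. g (\<phi> x) = x" "continuous_on (range \<phi>) g"
  shows "continuous_on (range \<phi>) (inv \<phi>)"
proof -
  have "inv \<phi> y = g y" if "y \<in> range \<phi>" for y
    using that assms(1) by (metis injI inv_f_f rangeE)
  then show ?thesis
    using continuous_on_cong assms(2) by blast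
qed

definition plane_embedding :: "(real^2 \<Rightarrow> real^6) \<Rightarrow> bool" where
  "plane_embedding \<phi> \<longleftrightarrow>
     smooth_on UNIV \<phi> \<and> immersion_on UNIV \<phi> \<and> inj \<phi> \<and> continuous_on (range \<phi>) (inv \<phi>)"

lemma plane_embedding_poly_map:
  assumes \<phi>: "\<And>x. \<phi> x = poly_map ms x"
    and left_inverse: "\<And>x. g (\<phi> x) = x"
    and g_diff: "\<And>x. g differentiable (at (\<phi> x))"
  shows "plane_embedding \<phi>"
proof -
  have "\<phi> = poly_map ms"
    using \<phi> by blast
  then have "smooth_on UNIV \<phi>" "\<And>x. \<phi> differentiable (at x)"
    by (simp_all add: smooth_on_poly_map poly_map_differentiable)
  moreover have "continuous_on (range \<phi>) g"
    using g_diff by (auto intro!: continuous_at_imp_continuous_on differentiable_imp_continuous_within)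
  ultimately show ?thesis
    unfolding plane_embedding_def
    using immersion_on_if_differentiable_left_inverse[of UNIV \<phi> g] continuous_on_inv_if_left_inverse[of g \<phi>]
      left_inverse g_diff by (auto intro: inj_on_inverseI)
qed

lemma diffeomorphic_to_planeI: "plane_embedding \<phi> \<Longrightarrow> range \<phi> = S \<Longrightarrow> diffeomorphic_to_plane S"
  unfolding plane_embedding_def diffeomorphic_to_plane_def by blast

lemma smooth_surfaceI:
  assumes "\<And>p. p \<in> S \<Longrightarrow> \<exists>U \<phi>. open U \<and> p \<in> U \<and> plane_embedding \<phi> \<and> range \<phi> = S \<inter> U"
  shows "smooth_surface S"
  unfolding smooth_surface_def
proof
  fix p assume "p \<in> S"
  then obtain U \<phi> where "open U" "p \<in> U" "plane_embedding \<phi>" "range \<phi> = S \<inter> U"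
    using assms by blast
  then show "\<exists>U (V :: (real^2) set) \<phi>. open U \<and> p \<in> U \<and> open V \<and> smooth_on V \<phi> \<and>
      immersion_on V \<phi> \<and> inj_on \<phi> V \<and> \<phi> ` V = S \<inter> U \<and> continuous_on (S \<inter> U) (inv_into V \<phi>)"
    unfolding plane_embedding_def by (metis open_UNIV)
qed

lemma smooth_surface_range: "plane_embedding \<phi> \<Longrightarrow> smooth_surface (range \<phi>)"
  by (rule smooth_surfaceI) (use open_UNIV in blast)

lemma tangent_space_component_eq_0:
  assumes "S \<subseteq> {q. q$i = c}" "w \<in> tangent_space S p"
  shows "w$i = 0"
proof -
  obtain \<gamma> where \<gamma>: "\<And>t. \<gamma> t \<in> S" "(\<gamma> has_vector_derivative w) (at 0)"
    using assms(2) unfolding tangent_space_def by blast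
  have "((\<lambda>t. \<gamma> t $ i) has_vector_derivative w $ i) (at 0)"
    using bounded_linear.has_vector_derivative[OF bounded_linear_vec_nth \<gamma>(2)] .
  moreover have "(\<lambda>t. \<gamma> t $ i) = (\<lambda>t. c)"
    using \<gamma>(1) assms(1) by auto
  ultimately show ?thesis
    using vector_derivative_unique_at[OF _ has_vector_derivative_const] by fastforce
qed

lemma tangent_spaces_differ:
  assumes "\<And>t. \<gamma> t \<in> S" "\<gamma> 0 = p" "(\<gamma> has_vector_derivative w) (at 0)"
    and "w$i \<noteq> 0" "T \<subseteq> {q. q$i = c}"
  shows "tangent_space S p \<noteq> tangent_space T p"
proof -
  have "w \<in> tangent_space S p"
    using assms(1-3) unfolding tangent_space_def by blast
  moreover have "w \<notin> tangent_space T p"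
    using tangent_space_component_eq_0[OF assms(5)] assms(4) by blast
  ultimately show ?thesis
    by blast
qed

section \<open>The surfaces B2 and B3\<close>

lemma B2_eq: "B2 = {p. p$3 = 0 \<and> p$4 = 0 \<and> p$5 = 0 \<and> p$6 = 0}"
  by (auto simp: B2_iff U2_def) (metis pt6_eta)

lemma B3_eq: "B3 = {p. p$3 = 0 \<and> p$4 = 1 + p$1 \<and> p$5 = 0 \<and> p$6 = 0}"
  by (auto simp: B3_iff U3_def) (metis pt6_eta)

lemma plane_embedding_U2: "plane_embedding (\<lambda>x. U2 (x$1) (x$2))"
proof (rule plane_embedding_poly_map[where g = "\<lambda>p. vector [p$1, p$2]"])
  show "U2 (x$1) (x$2) = poly_map [(1, 0, pt6 1 0 0 0 0 0), (0, 1, pt6 0 1 0 0 0 0)] x" for x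
    by (simp add: U2_def poly_map_def vec_eq_iff forall_6)
  show "vector [U2 (x$1) (x$2) $ 1, U2 (x$1) (x$2) $ 2] = x" for x :: "real^2"
    by (simp add: U2_def vector2_eq_iff)
qed (intro differentiable_vector2 differentiable_vec_nth)

lemma plane_embedding_U3: "plane_embedding (\<lambda>x. U3 (x$1) (x$2))"
proof (rule plane_embedding_poly_map[where g = "\<lambda>p. vector [p$1, p$2]"])
  show "U3 (x$1) (x$2) = poly_map [(0, 0, pt6 0 0 0 1 0 0), (1, 0, pt6 1 0 0 1 0 0), (0, 1, pt6 0 1 0 0 0 0)] x" for x
    by (simp add: U3_def poly_map_def vec_eq_iff forall_6)
  show "vector [U3 (x$1) (x$2) $ 1, U3 (x$1) (x$2) $ 2] = x" for x :: "real^2"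
    by (simp add: U3_def vector2_eq_iff)
qed (intro differentiable_vector2 differentiable_vec_nth)

lemma range_U2: "range (\<lambda>x::real^2. U2 (x$1) (x$2)) = B2"
  and range_U3: "range (\<lambda>x::real^2. U3 (x$1) (x$2)) = B3"
  unfolding B2_def B3_def by (rule range_vec2_param)+

lemma closed_B2: "closed B2"
  and closed_B3: "closed B3"
  unfolding B2_eq B3_eq by (intro closed_Collect_conj closed_Collect_eq continuous_intros)+

lemma B2_B3_transversal: "intersect_transversally_along B2 B3 (range (\<lambda>v. pt6 (-1) v 0 0 0 0))"
  unfolding intersect_transversally_along_def
proof (intro conjI ballI)
  show "B2 \<inter> B3 = range (\<lambda>v. pt6 (-1) v 0 0 0 0)"
    by (auto simp: B2_eq B3_eq image_iff vec_eq_iff forall_6)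
next
  fix p assume "p \<in> range (\<lambda>v. pt6 (-1) v 0 0 0 0)"
  then obtain v where p: "p = pt6 (-1) v 0 0 0 0"
    by blast
  have "tangent_space B3 p \<noteq> tangent_space B2 p"
  proof (rule tangent_spaces_differ[where \<gamma> = "\<lambda>t. U3 (t - 1) v" and w = "pt6 1 0 0 1 0 0" and i = 4 and c = 0])
    show "((\<lambda>t. U3 (t - 1) v) has_vector_derivative pt6 1 0 0 1 0 0) (at 0)"
      unfolding U3_def by (intro has_vector_derivative_pt6) (auto intro!: derivative_eq_intros)
    show "U3 (t - 1) v \<in> B3" for t
      by simp
    show "U3 (0 - 1) v = p"
      by (simp add: p U3_def)
  qed (auto simp: B2_eq)
  then show "tangent_space B2 p \<noteq> tangent_space B3 p"
    by (rule not_sym)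
qed

section \<open>The closure of B1\<close>

definition B1_tilde :: "(real^6) set" where
  "B1_tilde = {p. p$1 + p$4 = 1 \<and> p$6 = - p$3 \<and> (p$3)^2 = - (p$4 * p$5) \<and>
     p$2 * p$5 = - (p$3 * p$1) \<and> p$2 * p$3 = p$1 * p$4}"

definition B1_limit_line :: "(real^6) set" where
  "B1_limit_line = range (\<lambda>v. pt6 0 v 0 1 0 0)"

(* Chart around the line that the closure adds to B1, in the coordinate t = 1/s. *)
definition U1_inf :: "real \<Rightarrow> real \<Rightarrow> real^6" where
  "U1_inf t b = pt6 (- (b * t)) b (- (t + b * t^2)) (1 + b * t) (- (t^2 + b * t^3)) (t + b * t^2)"

lemma pt6_in_B1_tilde_iff:
  "pt6 a b c d e f \<in> B1_tilde \<longleftrightarrow> a + d = 1 \<and> f = - c \<and> c^2 = - (d * e) \<and> b * e = - (c * a) \<and> b * c = a * d"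
  by (simp add: B1_tilde_def)

lemma U1_inf_eq_U1: "t \<noteq> 0 \<Longrightarrow> U1_inf t b = U1 (- (1 + b * t) * t^2) (1 / t)"
  unfolding U1_inf_def U1_def pt6_eq_iff by (simp add: field_simps power2_eq_square power3_eq_cube)

lemma U1_eq_U1_inf: "s \<noteq> 0 \<Longrightarrow> U1 r s = U1_inf (1 / s) (- s * (1 + r * s^2))"
  unfolding U1_inf_def U1_def pt6_eq_iff by (simp add: field_simps power2_eq_square power3_eq_cube)

lemma U1_inf_0: "U1_inf 0 b = pt6 0 b 0 1 0 0"
  by (simp add: U1_inf_def)

lemma U1_in_B1_tilde: "U1 r s \<in> B1_tilde"
  unfolding U1_def pt6_in_B1_tilde_iff by (simp add: algebra_simps power2_eq_square)

lemma U1_inf_in_B1_tilde: "U1_inf t b \<in> B1_tilde"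
  unfolding U1_inf_def pt6_in_B1_tilde_iff by (simp add: algebra_simps power2_eq_square power3_eq_cube)

lemma B1_tilde_subset: "B1_tilde \<subseteq> B1 \<union> B1_limit_line"
proof
  fix p assume "p \<in> B1_tilde"
  obtain a b c d e f where p: "p = pt6 a b c d e f"
    by (metis pt6_eta)
  have h: "a + d = 1" "f = - c" "c^2 = - (d * e)" "b * e = - (c * a)" "b * c = a * d"
    using \<open>p \<in> B1_tilde\<close> unfolding p pt6_in_B1_tilde_iff by auto
  show "p \<in> B1 \<union> B1_limit_line"
  proof (cases "e = 0")
    case False
    have d: "d = - e * (c / e)^2"
      using h(3) False by (simp add: field_simps power2_eq_square)
    have a: "a = 1 + e * (c / e)^2"
      using h(1) d by simp
    have "p = U1 e (c / e)"
      unfolding p U1_def pt6_eq_iff using h(2,4) a d False by (simp add: field_simps)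
    then show ?thesis by simp
  next
    case True
    then have "c = 0"
      using h(3) by simp
    then have "a = 0 \<and> d = 1 \<or> a = 1 \<and> d = 0"
      using h(1,5) by auto
    then show ?thesis
    proof
      assume "a = 0 \<and> d = 1"
      then have "p = pt6 0 b 0 1 0 0"
        using p h(2) True \<open>c = 0\<close> by simp
      then show ?thesis by (simp add: B1_limit_line_def)
    next
      assume "a = 1 \<and> d = 0"
      then have "p = U1 0 (- b)"
        using p h(2) True \<open>c = 0\<close> by (simp add: U1_def)
      then show ?thesis by simp
    qed
  qed
qed

lemma B1_tilde_eq: "B1_tilde = B1 \<union> B1_limit_line"
  using B1_tilde_subset U1_in_B1_tilde by (auto simp: B1_iff B1_limit_line_def pt6_in_B1_tilde_iff)

lemma closed_B1_tilde: "closed B1_tilde"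
  unfolding B1_tilde_def by (intro closed_Collect_conj closed_Collect_eq continuous_intros)

lemma B1_limit_line_subset_closure: "B1_limit_line \<subseteq> closure B1"
proof
  fix p assume "p \<in> B1_limit_line"
  then obtain v where p: "p = U1_inf 0 v"
    by (auto simp: B1_limit_line_def U1_inf_0)
  have "((\<lambda>t. U1_inf t v) \<longlongrightarrow> U1_inf 0 v) (at 0)"
    unfolding U1_inf_def by (subst (1 2) pt6_basis_expansion) (intro tendsto_intros)
  moreover have "U1_inf t v \<in> closure B1" if "t \<noteq> 0" for t
    using U1_in_B1 closure_subset by (metis U1_inf_eq_U1[OF that] subsetD)
  then have "\<forall>\<^sub>F t in at 0. U1_inf t v \<in> closure B1"
    by (auto simp: eventually_at_filter)
  ultimately show "p \<in> closure B1"
    unfolding p using Lim_in_closed_set[OF closed_closure] by fastforce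
qed

lemma closure_B1: "closure B1 = B1_tilde"
proof
  show "closure B1 \<subseteq> B1_tilde"
    by (rule closure_minimal) (auto simp: B1_iff U1_in_B1_tilde closed_B1_tilde)
  show "B1_tilde \<subseteq> closure B1"
    using B1_tilde_eq B1_limit_line_subset_closure closure_subset by blast
qed

lemma U1_nondegenerate: "U1 r s $ 1 \<noteq> 0 \<or> U1 r s $ 5 \<noteq> 0"
  by (cases "r = 0") (simp_all add: U1_def)

(* On B1 we have e = r, c = r s and b = -a s, hence c e - a b = s (a^2 + e^2). *)
definition U1_coords :: "real^6 \<Rightarrow> real^2" where
  "U1_coords p = vector [p$5, (p$3 * p$5 - p$1 * p$2) / ((p$1)^2 + (p$5)^2)]"

lemma U1_coords_U1: "U1_coords (U1 r s) = vector [r, s]"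
proof -
  have "(U1 r s $ 1)^2 + (U1 r s $ 5)^2 \<noteq> 0"
    using U1_nondegenerate by simp
  moreover have "U1 r s $ 3 * U1 r s $ 5 - U1 r s $ 1 * U1 r s $ 2 = s * ((U1 r s $ 1)^2 + (U1 r s $ 5)^2)"
    by (simp add: U1_def algebra_simps power2_eq_square)
  ultimately show ?thesis
    unfolding U1_coords_def by (simp add: U1_def)
qed

lemma U1_coords_differentiable: "p$1 \<noteq> 0 \<or> p$5 \<noteq> 0 \<Longrightarrow> U1_coords differentiable (at p)"
  unfolding U1_coords_def by (intro differentiable_vector2 derivative_intros differentiable_vec_nth) simp

lemma plane_embedding_U1: "plane_embedding (\<lambda>x. U1 (x$1) (x$2))"
proof (rule plane_embedding_poly_map[where g = U1_coords])
  show "U1 (x$1) (x$2) = poly_map [(0, 0, pt6 1 0 0 0 0 0), (1, 2, pt6 1 0 0 (-1) 0 0),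
      (0, 1, pt6 0 (-1) 0 0 0 0), (1, 3, pt6 0 (-1) 0 0 0 0), (1, 1, pt6 0 0 1 0 0 (-1)),
      (1, 0, pt6 0 0 0 0 1 0)] x" for x :: "real^2"
    by (simp add: U1_def poly_map_def vec_eq_iff forall_6 algebra_simps power2_eq_square power3_eq_cube)
  show "U1_coords (U1 (x$1) (x$2)) = x" for x :: "real^2"
    by (simp add: U1_coords_U1 vector2_eq_iff)
  show "U1_coords differentiable (at (U1 (x$1) (x$2)))" for x :: "real^2"
    by (rule U1_coords_differentiable[OF U1_nondegenerate])
qed

lemma U1_inf_nondegenerate: "U1_inf t b $ 2 \<noteq> 0 \<or> U1_inf t b $ 4 \<noteq> 0"
  by (cases "b = 0") (simp_all add: U1_inf_def)

(* On the image of U1_inf we have a = -b t and c = -t d, hence -(c d + a b) = t (d^2 + b^2). *)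
definition U1_inf_coords :: "real^6 \<Rightarrow> real^2" where
  "U1_inf_coords p = vector [- (p$3 * p$4 + p$1 * p$2) / ((p$4)^2 + (p$2)^2), p$2]"

lemma U1_inf_coords_U1_inf: "U1_inf_coords (U1_inf t b) = vector [t, b]"
proof -
  have "(U1_inf t b $ 4)^2 + (U1_inf t b $ 2)^2 \<noteq> 0"
    by (metis U1_inf_nondegenerate sum_power2_eq_zero_iff)
  moreover have "- (U1_inf t b $ 3 * U1_inf t b $ 4 + U1_inf t b $ 1 * U1_inf t b $ 2) =
      t * ((U1_inf t b $ 4)^2 + (U1_inf t b $ 2)^2)"
    by (simp add: U1_inf_def algebra_simps power2_eq_square)
  ultimately show ?thesis
    unfolding U1_inf_coords_def by (simp add: U1_inf_def)
qed

lemma U1_inf_coords_differentiable: "p$2 \<noteq> 0 \<or> p$4 \<noteq> 0 \<Longrightarrow> U1_inf_coords differentiable (at p)"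
  unfolding U1_inf_coords_def by (intro differentiable_vector2 derivative_intros differentiable_vec_nth) auto

lemma plane_embedding_U1_inf: "plane_embedding (\<lambda>x. U1_inf (x$1) (x$2))"
proof (rule plane_embedding_poly_map[where g = U1_inf_coords])
  show "U1_inf (x$1) (x$2) = poly_map [(0, 0, pt6 0 0 0 1 0 0), (1, 1, pt6 (-1) 0 0 1 0 0),
      (0, 1, pt6 0 1 0 0 0 0), (1, 0, pt6 0 0 (-1) 0 0 1), (2, 1, pt6 0 0 (-1) 0 0 1),
      (2, 0, pt6 0 0 0 0 (-1) 0), (3, 1, pt6 0 0 0 0 (-1) 0)] x" for x :: "real^2"
    by (simp add: U1_inf_def poly_map_def vec_eq_iff forall_6 algebra_simps power2_eq_square power3_eq_cube)
  show "U1_inf_coords (U1_inf (x$1) (x$2)) = x" for x :: "real^2"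
    by (simp add: U1_inf_coords_U1_inf vector2_eq_iff)
  show "U1_inf_coords differentiable (at (U1_inf (x$1) (x$2)))" for x :: "real^2"
    by (rule U1_inf_coords_differentiable[OF U1_inf_nondegenerate])
qed

lemma range_U1: "range (\<lambda>x::real^2. U1 (x$1) (x$2)) = B1_tilde \<inter> {p. p$1 \<noteq> 0 \<or> p$5 \<noteq> 0}"
proof -
  have "B1 \<subseteq> {p. p$1 \<noteq> 0 \<or> p$5 \<noteq> 0}"
    using U1_nondegenerate by (auto simp: B1_iff)
  moreover have "B1_limit_line \<inter> {p. p$1 \<noteq> 0 \<or> p$5 \<noteq> 0} = {}"
    by (auto simp: B1_limit_line_def)
  ultimately show ?thesis
    unfolding range_vec2_param B1_def[symmetric] B1_tilde_eq by blast
qed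

lemma range_U1_inf: "range (\<lambda>x::real^2. U1_inf (x$1) (x$2)) = B1_tilde \<inter> {p. p$2 \<noteq> 0 \<or> p$4 \<noteq> 0}"
  (is "?range = B1_tilde \<inter> ?O")
proof
  show "?range \<subseteq> B1_tilde \<inter> ?O"
    using U1_inf_in_B1_tilde U1_inf_nondegenerate by auto
next
  have U1_inf_in_range: "U1_inf t b \<in> ?range" for t b
    unfolding range_vec2_param by auto
  moreover have "p \<in> ?range" if "p \<in> B1" "p \<in> ?O" for p
  proof -
    obtain r s where p: "p = U1 r s"
      using \<open>p \<in> B1\<close> by (auto simp: B1_iff)
    have "s \<noteq> 0"
      using \<open>p \<in> ?O\<close> by (auto simp: p U1_def)
    show ?thesis
      unfolding p U1_eq_U1_inf[OF \<open>s \<noteq> 0\<close>] by (rule U1_inf_in_range)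
  qed
  ultimately show "B1_tilde \<inter> ?O \<subseteq> ?range"
    unfolding B1_tilde_eq B1_limit_line_def by (auto simp flip: U1_inf_0)
qed

lemma smooth_surface_B1_tilde: "smooth_surface B1_tilde"
proof (rule smooth_surfaceI)
  fix p assume "p \<in> B1_tilde"
  have "open {p::real^6. p$1 \<noteq> 0 \<or> p$5 \<noteq> 0}" "open {p::real^6. p$2 \<noteq> 0 \<or> p$4 \<noteq> 0}"
    by (intro open_Collect_disj open_Collect_neq continuous_intros)+
  moreover have "(p$1 \<noteq> 0 \<or> p$5 \<noteq> 0) \<or> (p$2 \<noteq> 0 \<or> p$4 \<noteq> 0)"
    using \<open>p \<in> B1_tilde\<close> unfolding B1_tilde_def by auto
  ultimately show "\<exists>U \<phi>. open U \<and> p \<in> U \<and> plane_embedding \<phi> \<and> range \<phi> = B1_tilde \<inter> U"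
    using plane_embedding_U1 range_U1 plane_embedding_U1_inf range_U1_inf by blast
qed

lemma B1_tilde_B2_transversal: "intersect_transversally_along B1_tilde B2 (range (\<lambda>v. pt6 1 v 0 0 0 0))"
  unfolding intersect_transversally_along_def
proof (intro conjI ballI)
  show "B1_tilde \<inter> B2 = range (\<lambda>v. pt6 1 v 0 0 0 0)"
    by (auto simp: B1_tilde_def B2_eq image_iff vec_eq_iff forall_6)
next
  fix p assume "p \<in> range (\<lambda>v. pt6 1 v 0 0 0 0)"
  then obtain v where p: "p = pt6 1 v 0 0 0 0"
    by blast
  show "tangent_space B1_tilde p \<noteq> tangent_space B2 p"
  proof (rule tangent_spaces_differ[where \<gamma> = "\<lambda>r. U1 r (- v)" and i = 5 and c = 0
        and w = "pt6 (v * v) (v * v * v) (- v) (- (v * v)) 1 v"])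
    show "((\<lambda>r. U1 r (- v)) has_vector_derivative pt6 (v * v) (v * v * v) (- v) (- (v * v)) 1 v) (at 0)"
      unfolding U1_def by (intro has_vector_derivative_pt6) (auto intro!: derivative_eq_intros simp: power2_eq_square)
    show "U1 r (- v) \<in> B1_tilde" for r
      by (rule U1_in_B1_tilde)
    show "U1 0 (- v) = p"
      by (simp add: p U1_def)
  qed (auto simp: B2_eq)
qed

lemma B1_tilde_B3_transversal: "intersect_transversally_along B1_tilde B3 (range (\<lambda>v. pt6 0 v 0 1 0 0))"
  unfolding intersect_transversally_along_def
proof (intro conjI ballI)
  show "B1_tilde \<inter> B3 = range (\<lambda>v. pt6 0 v 0 1 0 0)"
    by (auto simp: B1_tilde_def B3_eq image_iff vec_eq_iff forall_6)
next
  fix p assume "p \<in> range (\<lambda>v. pt6 0 v 0 1 0 0)"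
  then obtain v where p: "p = pt6 0 v 0 1 0 0"
    by blast
  show "tangent_space B1_tilde p \<noteq> tangent_space B3 p"
  proof (rule tangent_spaces_differ[where \<gamma> = "\<lambda>t. U1_inf t v" and i = 3 and c = 0
        and w = "pt6 (- v) 0 (- 1) v 0 1"])
    show "((\<lambda>t. U1_inf t v) has_vector_derivative pt6 (- v) 0 (- 1) v 0 1) (at 0)"
      unfolding U1_inf_def by (intro has_vector_derivative_pt6) (auto intro!: derivative_eq_intros)
    show "U1_inf t v \<in> B1_tilde" for t
      by (rule U1_inf_in_B1_tilde)
    show "U1_inf 0 v = p"
      by (simp add: p U1_inf_0)
  qed (auto simp: B3_eq)
qed

theorem theorem1p5:
  shows "B0 = (B1 \<union> B2 \<union> B3) - {0}
    \<and> closed B2 \<and> smooth_surface B2 \<and> diffeomorphic_to_plane B2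
    \<and> closed B3 \<and> smooth_surface B3 \<and> diffeomorphic_to_plane B3
    \<and> intersect_transversally_along B2 B3 (range (\<lambda>v. pt6 (-1) v 0 0 0 0))
    \<and> (\<exists>B1t. B1 \<subseteq> B1t \<and> B1t \<subseteq> closure B1 \<and> closed B1t \<and> smooth_surface B1t
         \<and> intersect_transversally_along B1t B2 (range (\<lambda>v. pt6 1 v 0 0 0 0))
         \<and> intersect_transversally_along B1t B3 (range (\<lambda>v. pt6 0 v 0 1 0 0)))"
proof -
  have "smooth_surface B2" "diffeomorphic_to_plane B2"
    using smooth_surface_range diffeomorphic_to_planeI plane_embedding_U2 range_U2 by metis+
  moreover have "smooth_surface B3" "diffeomorphic_to_plane B3"
    using smooth_surface_range diffeomorphic_to_planeI plane_embedding_U3 range_U3 by metis+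
  moreover have "B1 \<subseteq> B1_tilde"
    using closure_B1 closure_subset by blast
  ultimately show ?thesis
    using B0_eq closed_B2 closed_B3 B2_B3_transversal closure_B1 closed_B1_tilde smooth_surface_B1_tilde
      B1_tilde_B2_transversal B1_tilde_B3_transversal by blast
qed

end
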